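(* Let $(q(x),q(x,dy))$ be a totally stable conservative $q$-pair on a measurable space $(E,\mathscr E)$ and let $c:E\to\mathbb R$ be measurable with $\sup_x c(x)\le0$ and $q(x)-c(x)>0$ for all $x$. Set $\Omega f(x)=\int_Eq(x,dy)[f(y)-f(x)]+c(x)f(x)$. Define $z^{(0)}\equiv1$ and $z^{(n+1)}(x)=\int_E\frac{q(x,dy)}{q(x)-c(x)}z^{(n)}(y)$, $x\in E$, $n\ge0$. Then $z^{(n)}(x)$ is non-increasing in $n$ for each $x$, with limit $\bar z(x)\in[0,1]$, and there exists a bounded measurable $h:E\to\mathbb R$, not identically zero, with $\Omega h(x)=0$ for all $x\in E$ if and only if $\bar z$ is not identically zero.
   Context: A $q$-pair $(q(x),q(x,dy))$ on $(E,\mathscr E)$: for each $x$, $q(x,\cdot)$ is a nonnegative measure on $\mathscr E$, $x\mapsto q(x,A)$ is measurable; totally stable means $q(x)<\infty$ for all $x$, conservative means $q(x)=q(x,E)$ for all $x$. *)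

theory Defs
  imports "HOL-Probability.Probability"
begin

text \<open>A q-pair on the measurable space M: q :: 'a \<Rightarrow> real (total rate, finite = totally stable)
  and a kernel qk :: 'a \<Rightarrow> 'a measure, each qk x a measure on the sets of M, with
  x \<mapsto> qk x A measurable.\<close>

definition q_pair :: "'a measure \<Rightarrow> ('a \<Rightarrow> real) \<Rightarrow> ('a \<Rightarrow> 'a measure) \<Rightarrow> bool" where
  "q_pair M q qk \<longleftrightarrow>
     (\<forall>x\<in>space M. sets (qk x) = sets M) \<and>
     (\<forall>A\<in>sets M. (\<lambda>x. emeasure (qk x) A) \<in> borel_measurable M) \<and>
     q \<in> borel_measurable M \<and> (\<forall>x\<in>space M. 0 \<le> q x)"

definition conservative_q_pair :: "'a measure \<Rightarrow> ('a \<Rightarrow> real) \<Rightarrow> ('a \<Rightarrow> 'a measure) \<Rightarrow> bool" where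
  "conservative_q_pair M q qk \<longleftrightarrow> (\<forall>x\<in>space M. emeasure (qk x) (space M) = ennreal (q x))"

definition Omega_op :: "('a \<Rightarrow> 'a measure) \<Rightarrow> ('a \<Rightarrow> real) \<Rightarrow> ('a \<Rightarrow> real) \<Rightarrow> 'a \<Rightarrow> real" where
  "Omega_op qk c f x = (\<integral>y. (f y - f x) \<partial>qk x) + c x * f x"

fun zseq :: "('a \<Rightarrow> real) \<Rightarrow> ('a \<Rightarrow> 'a measure) \<Rightarrow> ('a \<Rightarrow> real) \<Rightarrow> nat \<Rightarrow> 'a \<Rightarrow> real" where
  "zseq q qk c 0 = (\<lambda>x. 1)"
| "zseq q qk c (Suc n) = (\<lambda>x. (\<integral>y. zseq q qk c n y \<partial>qk x) / (q x - c x))"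

definition zbar :: "('a \<Rightarrow> real) \<Rightarrow> ('a \<Rightarrow> 'a measure) \<Rightarrow> ('a \<Rightarrow> real) \<Rightarrow> 'a \<Rightarrow> real" where
  "zbar q qk c x = lim (\<lambda>n. zseq q qk c n x)"

end

theory Submission
  imports Defs
begin

text \<open>Since \<open>q(x) - c(x) \<ge> q(x) = q(x, E)\<close>, the operator
  \<open>T f(x) = \<integral> q(x,dy) f(y) / (q(x) - c(x))\<close> maps functions with values in \<open>[0,1]\<close>
  monotonically into themselves; hence \<open>z\<^sup>(\<^sup>n\<^sup>) = T\<^sup>n 1\<close> decreases, and by dominated convergence
  its limit \<open>z\<close> is a fixed point of \<open>T\<close>, which is exactly \<open>\<Omega> z = 0\<close>.  Conversely, every
  bounded solution of \<open>\<Omega> h = 0\<close> is a fixed point of \<open>T\<close>, so \<open>|h| \<le> B\<close> propagates to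
  \<open>|h| \<le> B z\<^sup>(\<^sup>n\<^sup>)\<close> for all \<open>n\<close> and hence \<open>|h| \<le> B z\<close>: if \<open>z\<close> vanishes, so does \<open>h\<close>.\<close>

locale conservative_q_pair_space =
  fixes M :: "'a measure" and q :: "'a \<Rightarrow> real" and qk :: "'a \<Rightarrow> 'a measure"
  assumes q_pair: "q_pair M q qk"
    and conservative: "conservative_q_pair M q qk"
begin

lemma borel_measurable_q: "q \<in> borel_measurable M"
  using q_pair unfolding q_pair_def by auto

lemma q_nonneg: "x \<in> space M \<Longrightarrow> 0 \<le> q x"
  using q_pair unfolding q_pair_def by auto

lemma sets_qk: "x \<in> space M \<Longrightarrow> sets (qk x) = sets M"
  using q_pair unfolding q_pair_def by auto

lemma space_qk: "x \<in> space M \<Longrightarrow> space (qk x) = space M"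
  using sets_qk by (rule sets_eq_imp_space_eq)

lemma emeasure_qk_space: "x \<in> space M \<Longrightarrow> emeasure (qk x) (space M) = ennreal (q x)"
  using conservative unfolding conservative_q_pair_def by auto

lemma finite_measure_qk: "x \<in> space M \<Longrightarrow> finite_measure (qk x)"
  by (rule finite_measureI) (simp add: space_qk emeasure_qk_space)

lemma measure_qk_space: "x \<in> space M \<Longrightarrow> measure (qk x) (space (qk x)) = q x"
  by (simp add: measure_def space_qk emeasure_qk_space q_nonneg)

lemma measurable_qk:
  "x \<in> space M \<Longrightarrow> f \<in> borel_measurable M \<Longrightarrow> f \<in> borel_measurable (qk x)"
  using measurable_cong_sets[OF sets_qk refl] by blast

lemma integrable_qk:
  fixes f :: "'a \<Rightarrow> real"
  assumes x: "x \<in> space M" and f: "f \<in> borel_measurable M"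
    and bound: "\<And>y. y \<in> space M \<Longrightarrow> \<bar>f y\<bar> \<le> B"
  shows "integrable (qk x) f"
proof -
  interpret finite_measure "qk x" using finite_measure_qk[OF x] .
  show ?thesis
    by (rule integrable_const_bound[where B=B])
       (auto simp: space_qk[OF x] bound measurable_qk[OF x f])
qed

text \<open>Scaled by \<open>1 / (1 + q x)\<close> the kernel becomes a sub-probability kernel, for which
  measurability of integrals is available in the Giry monad.\<close>

lemma borel_measurable_integral_qk:
  fixes f :: "'a \<Rightarrow> real"
  assumes f: "f \<in> borel_measurable M" and f_nonneg: "\<And>y. y \<in> space M \<Longrightarrow> 0 \<le> f y"
  shows "(\<lambda>x. \<integral>y. f y \<partial>qk x) \<in> borel_measurable M"
proof -
  define L where "L x = scale_measure (ennreal (1 / (1 + q x))) (qk x)" for x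
  have L: "L \<in> M \<rightarrow>\<^sub>M subprob_algebra M"
  proof (rule measurable_subprob_algebra)
    fix x assume x: "x \<in> space M"
    have "emeasure (L x) (space (L x)) = ennreal (1 / (1 + q x)) * ennreal (q x)"
      by (simp add: L_def space_scale_measure space_qk[OF x] emeasure_qk_space[OF x])
    also have "\<dots> = ennreal (q x / (1 + q x))"
      using q_nonneg[OF x] by (simp add: ennreal_mult[symmetric])
    also have "\<dots> \<le> 1"
      using q_nonneg[OF x] by simp
    finally show "subprob_space (L x)"
      using x by (intro subprob_spaceI) (auto simp: L_def space_scale_measure space_qk)
    show "sets (L x) = sets M"
      using x by (simp add: L_def sets_qk)
  next
    fix A assume "A \<in> sets M"
    moreover have "(\<lambda>x. ennreal (1 / (1 + q x))) \<in> borel_measurable M"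
      using borel_measurable_q by measurable
    ultimately have "(\<lambda>x. ennreal (1 / (1 + q x)) * emeasure (qk x) A) \<in> borel_measurable M"
      using q_pair unfolding q_pair_def by (intro borel_measurable_times_ennreal) auto
    then show "(\<lambda>x. emeasure (L x) A) \<in> borel_measurable M"
      by (simp add: L_def)
  qed
  have "(\<lambda>x. \<integral>\<^sup>+y. ennreal (f y) \<partial>L x) \<in> borel_measurable M"
    by (rule measurable_compose[OF L nn_integral_measurable_subprob_algebra]) (use f in measurable)
  then have "(\<lambda>x. enn2real (ennreal (1 + q x) * (\<integral>\<^sup>+y. ennreal (f y) \<partial>L x))) \<in> borel_measurable M"
    using borel_measurable_q by measurable
  moreover have "(\<integral>y. f y \<partial>qk x) = enn2real (ennreal (1 + q x) * (\<integral>\<^sup>+y. ennreal (f y) \<partial>L x))"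
    if x: "x \<in> space M" for x
  proof -
    have "ennreal (1 + q x) * ennreal (1 / (1 + q x)) = 1"
      using q_nonneg[OF x] by (subst ennreal_mult[symmetric]) auto
    then have "ennreal (1 + q x) * (\<integral>\<^sup>+y. ennreal (f y) \<partial>L x) = (\<integral>\<^sup>+y. ennreal (f y) \<partial>qk x)"
      unfolding L_def using measurable_qk[OF x f]
      by (simp add: nn_integral_scale_measure mult.assoc[symmetric])
    moreover have "(\<integral>y. f y \<partial>qk x) = enn2real (\<integral>\<^sup>+y. ennreal (f y) \<partial>qk x)"
      by (rule integral_eq_nn_integral) (auto simp: measurable_qk[OF x f] space_qk[OF x] f_nonneg)
    ultimately show ?thesis by simp
  qed
  ultimately show ?thesis
    by (simp cong: measurable_cong)
qed

lemma Omega_op_eq: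
  assumes x: "x \<in> space M" and h: "h \<in> borel_measurable M"
    and bound: "\<And>y. y \<in> space M \<Longrightarrow> \<bar>h y\<bar> \<le> B"
  shows "Omega_op qk c h x = (\<integral>y. h y \<partial>qk x) - (q x - c x) * h x"
proof -
  have "(\<integral>y. (h y - h x) \<partial>qk x) = (\<integral>y. h y \<partial>qk x) - (\<integral>y. h x \<partial>qk x)"
    by (intro Bochner_Integration.integral_diff integrable_qk[OF x h bound]
        integrable_qk[OF x, where B="\<bar>h x\<bar>"]) auto
  then show ?thesis
    unfolding Omega_op_def by (simp add: measure_qk_space[OF x] algebra_simps)
qed

end

locale killed_q_pair_space = conservative_q_pair_space +
  fixes c :: "'a \<Rightarrow> real"
  assumes borel_measurable_c: "c \<in> borel_measurable M"
    and c_nonpos: "\<And>x. x \<in> space M \<Longrightarrow> c x \<le> 0"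
    and q_minus_c_pos: "\<And>x. x \<in> space M \<Longrightarrow> 0 < q x - c x"
begin

abbreviation "z \<equiv> zseq q qk c"

lemma zseq_measurable_unit_interval:
  "z n \<in> borel_measurable M \<and> (\<forall>x\<in>space M. 0 \<le> z n x \<and> z n x \<le> 1)"
proof (induction n)
  case 0
  then show ?case by simp
next
  case (Suc n)
  then have zn: "z n \<in> borel_measurable M"
    and zn_bounds: "\<And>y. y \<in> space M \<Longrightarrow> 0 \<le> z n y \<and> z n y \<le> 1"
    by auto
  have "(\<lambda>x. (\<integral>y. z n y \<partial>qk x) / (q x - c x)) \<in> borel_measurable M"
    by (intro borel_measurable_divide borel_measurable_diff borel_measurable_integral_qk)
       (use zn zn_bounds borel_measurable_q borel_measurable_c in auto)
  moreover have "0 \<le> z (Suc n) x \<and> z (Suc n) x \<le> 1" if x: "x \<in> space M" for x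
  proof -
    have "0 \<le> (\<integral>y. z n y \<partial>qk x)"
      by (intro integral_nonneg_AE AE_I2) (use zn_bounds space_qk[OF x] in auto)
    moreover have "(\<integral>y. z n y \<partial>qk x) \<le> (\<integral>y. 1 \<partial>qk x)"
      by (intro integral_mono integrable_qk[OF x zn, where B=1] integrable_qk[OF x, where B=1])
         (use zn_bounds space_qk[OF x] in auto)
    moreover have "(\<integral>y. 1 \<partial>qk x) \<le> q x - c x"
      using measure_qk_space[OF x] c_nonpos[OF x] by simp
    ultimately show ?thesis
      using q_minus_c_pos[OF x] by (simp add: divide_le_eq_1)
  qed
  ultimately show ?case by simp
qed

lemma borel_measurable_zseq: "z n \<in> borel_measurable M"
  using zseq_measurable_unit_interval by blast

lemma zseq_nonneg: "x \<in> space M \<Longrightarrow> 0 \<le> z n x"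
  using zseq_measurable_unit_interval by blast

lemma zseq_le_1: "x \<in> space M \<Longrightarrow> z n x \<le> 1"
  using zseq_measurable_unit_interval by blast

lemma integrable_zseq: "x \<in> space M \<Longrightarrow> integrable (qk x) (z n)"
  by (rule integrable_qk[OF _ borel_measurable_zseq, where B=1]) (use zseq_nonneg zseq_le_1 in auto)

lemma zseq_Suc: "z (Suc n) x = (\<integral>y. z n y \<partial>qk x) / (q x - c x)"
  by simp

lemma zseq_Suc_le: "x \<in> space M \<Longrightarrow> z (Suc n) x \<le> z n x"
proof (induction n arbitrary: x)
  case 0
  then show ?case using zseq_le_1[of x "Suc 0"] by simp
next
  case (Suc n)
  have "(\<integral>y. z (Suc n) y \<partial>qk x) \<le> (\<integral>y. z n y \<partial>qk x)"
    by (rule integral_mono[OF integrable_zseq integrable_zseq])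
       (use Suc space_qk[OF Suc.prems] in auto)
  then have "(\<integral>y. z (Suc n) y \<partial>qk x) / (q x - c x) \<le> (\<integral>y. z n y \<partial>qk x) / (q x - c x)"
    using q_minus_c_pos[OF Suc.prems] by (simp add: divide_right_mono)
  then show ?case by (simp only: zseq_Suc)
qed

lemma decseq_zseq: "x \<in> space M \<Longrightarrow> decseq (\<lambda>n. z n x)"
  using zseq_Suc_le by (simp add: decseq_Suc_iff)

lemma zseq_tendsto_zbar: "x \<in> space M \<Longrightarrow> (\<lambda>n. z n x) \<longlonglongrightarrow> zbar q qk c x"
proof -
  assume x: "x \<in> space M"
  have "convergent (\<lambda>n. z n x)"
  proof (rule Bseq_monoseq_convergent)
    show "Bseq (\<lambda>n. z n x)"
      by (rule BseqI'[where K=1]) (use zseq_nonneg[OF x] zseq_le_1[OF x] in auto)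
    show "monoseq (\<lambda>n. z n x)"
      using decseq_zseq[OF x] by (rule decseq_imp_monoseq)
  qed
  then show ?thesis
    unfolding zbar_def by (simp add: convergent_LIMSEQ_iff)
qed

lemma zbar_nonneg: "x \<in> space M \<Longrightarrow> 0 \<le> zbar q qk c x"
  by (rule LIMSEQ_le_const[OF zseq_tendsto_zbar]) (auto intro: zseq_nonneg)

lemma zbar_le_1: "x \<in> space M \<Longrightarrow> zbar q qk c x \<le> 1"
  by (rule LIMSEQ_le_const2[OF zseq_tendsto_zbar]) (auto intro: zseq_le_1)

lemma borel_measurable_zbar: "zbar q qk c \<in> borel_measurable M"
  by (rule borel_measurable_LIMSEQ_real[OF zseq_tendsto_zbar borel_measurable_zseq])

lemma integral_qk_zbar:
  assumes x: "x \<in> space M"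
  shows "(\<integral>y. zbar q qk c y \<partial>qk x) = (q x - c x) * zbar q qk c x"
proof (rule LIMSEQ_unique)
  show "(\<lambda>n. \<integral>y. z n y \<partial>qk x) \<longlonglongrightarrow> (\<integral>y. zbar q qk c y \<partial>qk x)"
  proof (rule integral_dominated_convergence[where w="\<lambda>y. 1"])
    show "zbar q qk c \<in> borel_measurable (qk x)"
      by (rule measurable_qk[OF x borel_measurable_zbar])
    show "z n \<in> borel_measurable (qk x)" for n
      by (rule measurable_qk[OF x borel_measurable_zseq])
    show "integrable (qk x) (\<lambda>y. 1::real)"
      by (rule integrable_qk[OF x, where B=1]) auto
    show "AE y in qk x. (\<lambda>n. z n y) \<longlonglongrightarrow> zbar q qk c y"
      by (rule AE_I2) (use zseq_tendsto_zbar space_qk[OF x] in auto)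
    show "AE y in qk x. norm (z n y) \<le> 1" for n
      by (rule AE_I2) (use zseq_nonneg zseq_le_1 space_qk[OF x] in auto)
  qed
  have "(\<lambda>n. (q x - c x) * z (Suc n) x) \<longlonglongrightarrow> (q x - c x) * zbar q qk c x"
    by (intro tendsto_mult_left LIMSEQ_Suc zseq_tendsto_zbar[OF x])
  then show "(\<lambda>n. \<integral>y. z n y \<partial>qk x) \<longlonglongrightarrow> (q x - c x) * zbar q qk c x"
    using q_minus_c_pos[OF x] by simp
qed

lemma Omega_op_zbar: "x \<in> space M \<Longrightarrow> Omega_op qk c (zbar q qk c) x = 0"
  using Omega_op_eq[OF _ borel_measurable_zbar, of x 1] zbar_nonneg zbar_le_1 integral_qk_zbar
  by auto

lemma abs_le_zseq_if_Omega_op_zero: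
  assumes h: "h \<in> borel_measurable M" and bound: "\<And>y. y \<in> space M \<Longrightarrow> \<bar>h y\<bar> \<le> B"
    and harmonic: "\<And>x. x \<in> space M \<Longrightarrow> Omega_op qk c h x = 0"
  shows "x \<in> space M \<Longrightarrow> \<bar>h x\<bar> \<le> B * z n x"
proof (induction n arbitrary: x)
  case 0
  then show ?case using bound by simp
next
  case (Suc n)
  note x = Suc.prems
  have "\<bar>\<integral>y. h y \<partial>qk x\<bar> \<le> (\<integral>y. \<bar>h y\<bar> \<partial>qk x)"
    by (rule integral_abs_bound)
  also have "\<dots> \<le> (\<integral>y. B * z n y \<partial>qk x)"
  proof (rule integral_mono)
    show "integrable (qk x) (\<lambda>y. \<bar>h y\<bar>)"
      by (rule integrable_qk[OF x, where B=B]) (use h bound in auto)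
    show "integrable (qk x) (\<lambda>y. B * z n y)"
      using integrable_zseq[OF x] by simp
    show "\<bar>h y\<bar> \<le> B * z n y" if "y \<in> space (qk x)" for y
      using Suc.IH that space_qk[OF x] by auto
  qed
  finally have "\<bar>\<integral>y. h y \<partial>qk x\<bar> / (q x - c x) \<le> B * z (Suc n) x"
    using q_minus_c_pos[OF x] by (simp add: divide_right_mono)
  moreover have "(\<integral>y. h y \<partial>qk x) = (q x - c x) * h x"
    using Omega_op_eq[OF x h bound] harmonic[OF x] by simp
  then have "h x = (\<integral>y. h y \<partial>qk x) / (q x - c x)"
    using q_minus_c_pos[OF x] by (simp add: field_simps)
  ultimately show ?case
    using q_minus_c_pos[OF x] by (simp add: abs_div)
qed

lemma abs_le_zbar_if_Omega_op_zero:
  assumes "h \<in> borel_measurable M" "\<And>y. y \<in> space M \<Longrightarrow> \<bar>h y\<bar> \<le> B"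
    "\<And>x. x \<in> space M \<Longrightarrow> Omega_op qk c h x = 0" "x \<in> space M"
  shows "\<bar>h x\<bar> \<le> B * zbar q qk c x"
  by (rule LIMSEQ_le_const[OF tendsto_mult_left[OF zseq_tendsto_zbar[OF assms(4)]]])
     (use abs_le_zseq_if_Omega_op_zero[OF assms] in auto)

end

theorem mainTheorem6:
  fixes M :: "'a measure" and q :: "'a \<Rightarrow> real" and qk :: "'a \<Rightarrow> 'a measure"
    and c :: "'a \<Rightarrow> real"
  assumes "q_pair M q qk"
    and "conservative_q_pair M q qk"
    and "c \<in> borel_measurable M"
    and "\<forall>x\<in>space M. c x \<le> 0"
    and "\<forall>x\<in>space M. q x - c x > 0"
  shows "(\<forall>x\<in>space M. decseq (\<lambda>n. zseq q qk c n x)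
            \<and> (\<lambda>n. zseq q qk c n x) \<longlonglongrightarrow> zbar q qk c x
            \<and> 0 \<le> zbar q qk c x \<and> zbar q qk c x \<le> 1)
       \<and> ((\<exists>h \<in> borel_measurable M. bounded (h ` space M)
              \<and> (\<exists>x\<in>space M. h x \<noteq> 0)
              \<and> (\<forall>x\<in>space M. Omega_op qk c h x = 0))
          \<longleftrightarrow> (\<exists>x\<in>space M. zbar q qk c x \<noteq> 0))"
proof -
  interpret killed_q_pair_space M q qk c
    using assms by unfold_locales auto
  have "\<exists>x\<in>space M. zbar q qk c x \<noteq> 0"
    if h: "h \<in> borel_measurable M" "bounded (h ` space M)" "x \<in> space M" "h x \<noteq> 0"
      "\<forall>x\<in>space M. Omega_op qk c h x = 0" for h x
  proof -
    obtain B where "\<And>y. y \<in> space M \<Longrightarrow> \<bar>h y\<bar> \<le> B"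
      using h(2) unfolding bounded_pos by auto
    then have "\<bar>h x\<bar> \<le> B * zbar q qk c x"
      using h by (intro abs_le_zbar_if_Omega_op_zero) auto
    then show ?thesis using h(3,4) by (intro bexI[of _ x]) auto
  qed
  moreover have "bounded (zbar q qk c ` space M)"
    unfolding bounded_iff using zbar_nonneg zbar_le_1 by (intro exI[of _ 1]) auto
  ultimately show ?thesis
    using decseq_zseq zseq_tendsto_zbar zbar_nonneg zbar_le_1 borel_measurable_zbar Omega_op_zbar
    by blast
qed

end
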